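(* For every copula $C\in\mathcal{F}^3_\Pi$ we have $d_\infty(C,\psi(C))\le\frac18$. Moreover, for every $C\in\mathcal{F}^3_\Pi$ the following are equivalent: (a) $d_\infty(C,\psi(C))=\frac18$; (b) either $\mu_C[(0,\tfrac12)\times(0,\tfrac12)\times(0,\tfrac12)]=\mu_C[(0,\tfrac12)\times(\tfrac12,1)\times(\tfrac12,1)]=\mu_C[(\tfrac12,1)\times(\tfrac12,1)\times(0,\tfrac12)]=\mu_C[(\tfrac12,1)\times(0,\tfrac12)\times(\tfrac12,1)]=\tfrac14$, or $\mu_C[(0,\tfrac12)\times(0,\tfrac12)\times(\tfrac12,1)]=\mu_C[(0,\tfrac12)\times(\tfrac12,1)\times(0,\tfrac12)]=\mu_C[(\tfrac12,1)\times(\tfrac12,1)\times(\tfrac12,1)]=\mu_C[(\tfrac12,1)\times(0,\tfrac12)\times(0,\tfrac12)]=\tfrac14$.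
   Context: $\mathbb{I}=[0,1]$, $\lambda$ Lebesgue measure, $\Pi$ the independence copula, $\mu_C$ the probability measure of a copula $C$, $d_\infty(C_1,C_2)=\max_{\mathbf{x}\in\mathbb{I}^3}|C_1(\mathbf{x})-C_2(\mathbf{x})|$. $\mathcal{F}^3_\Pi$ is the class of three-dimensional copulas $C$ whose bivariate marginals satisfy $C_{13}=\Pi=C_{23}$, where $C_{13}(u_1,v)=C(u_1,1,v)$ and $C_{23}(u_2,v)=C(1,u_2,v)$. Points of $\mathbb{I}^3$ are written $(\mathbf{u},v)$, $\mathbf{u}=(u_1,u_2)$. For a three-dimensional copula $C$, $K_C$ is (a version of) the regular conditional distribution of $(U_1,U_2)$ given $U_3=v$, $(U_1,U_2,U_3)\sim C$; $F_{1|3}(u_1|t)=K_C(t,[0,u_1]\times\mathbb{I})$, $F_{2|3}(u_2|t)=K_C(t,\mathbb{I}\times[0,u_2])$; for $\lambda$-a.e. $t$ the conditional copula $C^t_{12;3}$ is the (a.e. unique, since these conditional marginals are continuous for $C\in\mathcal{F}^3_\Pi$) bivariate copula with $K_C(t,[\mathbf{0},\mathbf{u}])=C^t_{12;3}(F_{1|3}(u_1|t),F_{2|3}(u_2|t))$. The partial copula is $C_p(\mathbf{s})=\int_{\mathbb{I}}C^t_{12;3}(\mathbf{s})\,d\lambda(t)$ and the partial vine copula is $\psi(C)(\mathbf{u},v)=\int_{[0,v]}C_p(F_{1|3}(u_1|t),F_{2|3}(u_2|t))\,d\lambda(t)$. *)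

theory Defs
  imports "HOL-Probability.Probability"
begin

text \<open>Points of the unit cube are written (u1, u2, v) = (u1, (u2, v)).\<close>

definition unit_cube3 :: "(real \<times> real \<times> real) set" where
  "unit_cube3 = {0..1} \<times> {0..1} \<times> {0..1}"

definition unit_square :: "(real \<times> real) set" where
  "unit_square = {0..1} \<times> {0..1}"

definition copula_measure3 :: "(real \<times> real \<times> real) measure \<Rightarrow> bool" where
  "copula_measure3 M \<longleftrightarrow> prob_space M \<and> sets M = sets borel \<and>
     emeasure M unit_cube3 = 1 \<and>
     (\<forall>u\<in>{0..1}. measure M {x. fst x \<le> u} = u \<and>
                  measure M {x. fst (snd x) \<le> u} = u \<and>
                  measure M {x. snd (snd x) \<le> u} = u)"

definition copula_measure2 :: "(real \<times> real) measure \<Rightarrow> bool" where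
  "copula_measure2 N \<longleftrightarrow> prob_space N \<and> sets N = sets borel \<and>
     emeasure N unit_square = 1 \<and>
     (\<forall>u\<in>{0..1}. measure N {x. fst x \<le> u} = u \<and> measure N {x. snd x \<le> u} = u)"

text \<open>A (3- resp. 2-dimensional) copula is (the restriction to the unit cube of) the
  distribution function of such a measure; values outside the cube are irrelevant.\<close>

definition is_cdf3_of :: "(real \<times> real \<times> real \<Rightarrow> real) \<Rightarrow> (real \<times> real \<times> real) measure \<Rightarrow> bool" where
  "is_cdf3_of C M \<longleftrightarrow> (\<forall>x\<in>unit_cube3.
      C x = measure M ({0..fst x} \<times> {0..fst (snd x)} \<times> {0..snd (snd x)}))"

definition copula3 :: "(real \<times> real \<times> real \<Rightarrow> real) \<Rightarrow> bool" where
  "copula3 C \<longleftrightarrow> (\<exists>M. copula_measure3 M \<and> is_cdf3_of C M)"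

definition copula2 :: "(real \<times> real \<Rightarrow> real) \<Rightarrow> bool" where
  "copula2 D \<longleftrightarrow> (\<exists>N. copula_measure2 N \<and>
      (\<forall>s\<in>unit_square. D s = measure N ({0..fst s} \<times> {0..snd s})))"

definition mu_C :: "(real \<times> real \<times> real \<Rightarrow> real) \<Rightarrow> (real \<times> real \<times> real) measure" where
  "mu_C C = (THE M. copula_measure3 M \<and> is_cdf3_of C M)"

text \<open>The class F^3_Pi: C_13 = Pi = C_23.\<close>

definition F_Pi3 :: "(real \<times> real \<times> real \<Rightarrow> real) \<Rightarrow> bool" where
  "F_Pi3 C \<longleftrightarrow> copula3 C \<and>
     (\<forall>u1\<in>{0..1}. \<forall>v\<in>{0..1}. C (u1, 1, v) = u1 * v) \<and>
     (\<forall>u2\<in>{0..1}. \<forall>v\<in>{0..1}. C (1, u2, v) = u2 * v)"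

text \<open>K is a version of the regular conditional distribution of (U1,U2) given U3,
  where (U1,U2,U3) has law M.\<close>

definition reg_cond_dist :: "(real \<times> real \<times> real) measure \<Rightarrow> (real \<Rightarrow> (real \<times> real) measure) \<Rightarrow> bool" where
  "reg_cond_dist M K \<longleftrightarrow>
     (\<forall>t. prob_space (K t) \<and> sets (K t) = sets borel) \<and>
     (\<forall>A\<in>sets (borel :: (real \<times> real) measure). (\<lambda>t. measure (K t) A) \<in> borel_measurable borel) \<and>
     (\<forall>A\<in>sets (borel :: (real \<times> real) measure). \<forall>B\<in>sets (borel :: real measure).
        measure M {x\<in>space M. (fst x, fst (snd x)) \<in> A \<and> snd (snd x) \<in> B} =
        set_lebesgue_integral (distr M borel (\<lambda>x. snd (snd x))) B (\<lambda>t. measure (K t) A))"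

definition cond_marg1 :: "(real \<Rightarrow> (real \<times> real) measure) \<Rightarrow> real \<Rightarrow> real \<Rightarrow> real" where
  "cond_marg1 K u1 t = measure (K t) ({0..u1} \<times> {0..1})"

definition cond_marg2 :: "(real \<Rightarrow> (real \<times> real) measure) \<Rightarrow> real \<Rightarrow> real \<Rightarrow> real" where
  "cond_marg2 K u2 t = measure (K t) ({0..1} \<times> {0..u2})"

definition cond_copula :: "(real \<Rightarrow> (real \<times> real) measure) \<Rightarrow> (real \<Rightarrow> real \<times> real \<Rightarrow> real) \<Rightarrow> bool" where
  "cond_copula K Ct \<longleftrightarrow> (AE t in lborel. t \<in> {0..1} \<longrightarrow>
      copula2 (Ct t) \<and>
      (\<forall>u1\<in>{0..1}. \<forall>u2\<in>{0..1}.
         measure (K t) ({0..u1} \<times> {0..u2}) = Ct t (cond_marg1 K u1 t, cond_marg2 K u2 t)))"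

definition partial_copula :: "(real \<Rightarrow> real \<times> real \<Rightarrow> real) \<Rightarrow> real \<times> real \<Rightarrow> real" where
  "partial_copula Ct s = set_lebesgue_integral lebesgue {0..1} (\<lambda>t. Ct t s)"

definition psi :: "(real \<Rightarrow> (real \<times> real) measure) \<Rightarrow> (real \<Rightarrow> real \<times> real \<Rightarrow> real)
                   \<Rightarrow> real \<times> real \<times> real \<Rightarrow> real" where
  "psi K Ct x = set_lebesgue_integral lebesgue {0..snd (snd x)}
      (\<lambda>t. partial_copula Ct (cond_marg1 K (fst x) t, cond_marg2 K (fst (snd x)) t))"

definition d_inf :: "(real \<times> real \<times> real \<Rightarrow> real) \<Rightarrow> (real \<times> real \<times> real \<Rightarrow> real) \<Rightarrow> real" where
  "d_inf C1 C2 = (SUP x\<in>unit_cube3. \<bar>C1 x - C2 x\<bar>)"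

end

theory Submission
  imports Defs
begin

(*
  Because C_13 = C_23 = Pi, each of the events {U1 <= u} and {U2 <= u} is independent of U3;
  hence the conditional margins F_1|3(u|t), F_2|3(u|t) equal u for a.e. t, the conditional
  copulas are the conditional distribution functions of (U1, U2) given U3, the partial copula
  is C_12 and psi(C)(u1, u2, v) = v * C(u1, u2, 1).

  Split the mass C(u1, u2, 1) of [0,u1] x [0,u2] x [0,1] into a = C(u1, u2, v) and the rest
  c - a.  In each slab {U3 <= v}, {U3 > v} the Frechet-Hoeffding bounds with margins u1 s, u2 s
  (s the mass of the slab) apply, and a - v c = (1 - v) a - v (c - a) then gives
  |C - psi(C)| <= v (1 - v) (min u1 u2 - max 0 (u1 + u2 - 1)) <= 1/8, with equality only at
  the centre of the cube.  There |C - psi(C)| = |q000 - q001| / 2, where the q are the masses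
  of the eight half-cubes; the linear constraints the margins impose on the q leave exactly the
  two configurations of the statement.
*)

lemma measure_eqI_atMost:
  fixes N1 N2 :: "'a::ordered_euclidean_space measure"
  assumes "finite_measure N1" and "sets N1 = sets borel" and "sets N2 = sets borel"
    and "\<And>a. emeasure N1 {..a} = emeasure N2 {..a}"
  shows "N1 = N2"
proof (rule measure_eqI_generator_eq[where E="range atMost" and \<Omega>=UNIV and A="\<lambda>i. {..real i *\<^sub>R One}"])
  show "Int_stable (range atMost :: 'a set set)"
    unfolding Int_stable_def
  proof safe
    fix a b :: 'a
    have "{..a} \<inter> {..b} = {..inf a b}" by auto
    then show "{..a} \<inter> {..b} \<in> range atMost" by blast
  qed
  show "sets N1 = sigma_sets UNIV (range atMost)" "sets N2 = sigma_sets UNIV (range atMost)"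
    using assms(2,3) by (simp_all add: borel_eq_atMost)
  show "emeasure N1 {..real i *\<^sub>R One} \<noteq> \<infinity>" for i
    using finite_measure.emeasure_finite[OF assms(1)] by (simp add: top_ennreal_def[symmetric])
  show "(\<Union>i. {..real i *\<^sub>R (One::'a)}) = UNIV"
  proof safe
    fix x :: 'a
    obtain k :: nat where k: "norm x \<le> real k" using real_arch_simple by blast
    have "x \<bullet> i \<le> (real k *\<^sub>R One) \<bullet> i" if "i \<in> Basis" for i
      using Basis_le_norm[OF that, of x] k that
      by (simp add: inner_commute inner_sum_right inner_Basis if_distrib sum.delta cong: if_cong)
    then show "x \<in> (\<Union>i. {..real i *\<^sub>R One})" by (auto simp: eucl_le[where 'a='a])
  qed auto
qed (use assms(4) in auto)

(* partial_copula and psi integrate over lebesgue, and their integrands are not known to be Borel. *)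
lemma set_integral_lebesgue_eq_lborel_AE:
  fixes f g :: "'a::euclidean_space \<Rightarrow> real"
  assumes [measurable]: "S \<in> sets borel" "g \<in> borel_measurable borel"
    and "AE t in lborel. t \<in> S \<longrightarrow> f t = g t"
  shows "set_lebesgue_integral lebesgue S f = set_lebesgue_integral lborel S g"
proof -
  let ?f = "\<lambda>t. indicator S t *\<^sub>R f t" and ?g = "\<lambda>t. indicator S t *\<^sub>R g t"
  have "AE t in lebesgue. ?g t = ?f t"
    by (rule AE_completion) (use assms(3) in \<open>eventually_elim, auto simp: indicator_def\<close>)
  moreover have g: "?g \<in> borel_measurable lebesgue"
    by (rule measurable_completion) measurable
  ultimately have "integral\<^sup>L lebesgue ?f = integral\<^sup>L lebesgue ?g"
    by (intro integral_cong_AE borel_measurable_AE[OF g]) auto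
  also have "\<dots> = integral\<^sup>L lborel ?g"
    by (rule integral_completion) measurable
  finally show ?thesis unfolding set_lebesgue_integral_def .
qed

lemma (in finite_measure) finite_measure_Int_ge:
  assumes "A \<in> sets M" "B \<in> sets M" "T \<in> sets M" "A \<union> B \<subseteq> T"
  shows "measure M A + measure M B - measure M T \<le> measure M (A \<inter> B)"
proof -
  have "measure M (A \<union> B) = measure M A + measure M B - measure M (A \<inter> B)"
    using assms by (intro measure_Un3) (auto simp: fmeasurable_eq_sets)
  moreover have "measure M (A \<union> B) \<le> measure M T"
    using assms by (intro finite_measure_mono) auto
  ultimately show ?thesis
    by simp
qed

lemma measurable_coordinates3 [measurable]:
  "(\<lambda>x::real \<times> real \<times> real. fst x) \<in> borel_measurable borel"
  "(\<lambda>x::real \<times> real \<times> real. fst (snd x)) \<in> borel_measurable borel"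
  "(\<lambda>x::real \<times> real \<times> real. snd (snd x)) \<in> borel_measurable borel"
  "(\<lambda>x::real \<times> real \<times> real. (fst x, fst (snd x))) \<in> borel_measurable borel"
  by (auto intro!: borel_measurable_continuous_onI continuous_intros)

declare borel_Times [simp]

section \<open>Random variables uniform on the unit interval\<close>

lemma (in prob_space) distributed_uniform01I:
  fixes X :: "'a \<Rightarrow> real"
  assumes "X \<in> borel_measurable M" and "\<And>u. u \<in> {0..1} \<Longrightarrow> prob {x\<in>space M. X x \<le> u} = u"
  shows "distributed M lborel X (indicator {0..1})"
  using uniform_distrI_borel_atLeastAtMost[of X 0 1] assms
  by (simp add: ennreal_indicator)

lemma (in prob_space) prob_uniform01:
  fixes X :: "'a \<Rightarrow> real"
  assumes "distributed M lborel X (indicator {0..1})" and "B \<in> sets borel"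
  shows "prob {x\<in>space M. X x \<in> B} = measure lborel (B \<inter> {0..1})"
proof -
  have [measurable]: "X \<in> borel_measurable M"
    using distributed_measurable[OF assms(1)] by simp
  have "emeasure M {x\<in>space M. X x \<in> B} = emeasure (distr M lborel X) B"
    using assms(2) by (simp add: emeasure_distr vimage_def Int_def conj_commute)
  also have "\<dots> = emeasure lborel (B \<inter> {0..1})"
    unfolding distributed_distr_eq_density[OF assms(1)]
    using assms(2) by (subst emeasure_restricted) (auto simp: Int_commute)
  finally show ?thesis
    unfolding measure_def by simp
qed

lemma (in prob_space) prob_uniform01_Ioc_le:
  fixes X :: "'a \<Rightarrow> real"
  assumes "distributed M lborel X (indicator {0..1})"
  shows "prob {x\<in>space M. a < X x \<and> X x \<le> b} \<le> \<bar>b - a\<bar>"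
proof (cases "a \<le> b")
  case False
  then have empty: "{x\<in>space M. a < X x \<and> X x \<le> b} = {}"
    by auto
  show ?thesis
    unfolding empty by simp
next
  case True
  have "prob {x\<in>space M. a < X x \<and> X x \<le> b} = measure lborel ({a<..b} \<inter> {0..1})"
    using prob_uniform01[OF assms(1), of "{a<..b}"] by simp
  also have "\<dots> \<le> measure lborel {a<..b}"
    by (intro measure_mono_fmeasurable fmeasurableI2[OF fmeasurable_cbox[of a b]]) auto
  finally show ?thesis
    using True by simp
qed

lemma (in prob_space) AE_uniform01:
  fixes X :: "'a \<Rightarrow> real"
  assumes "distributed M lborel X (indicator {0..1})" and [measurable]: "B \<in> sets borel"
    and "finite ({0..1} - B)"
  shows "AE x in M. X x \<in> B"
proof -
  have [measurable]: "X \<in> borel_measurable M"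
    using distributed_measurable[OF assms(1)] by simp
  have "prob {x\<in>space M. X x \<in> - B} = measure lborel ({0..1} - B)"
    using prob_uniform01[OF assms(1), of "- B"] by (simp add: Diff_eq Int_commute)
  also have "\<dots> = 0"
    using assms(3) by (simp add: measure_eq_0_null_sets finite_imp_null_set_lborel)
  finally show ?thesis
    by (intro AE_I[where N="{x\<in>space M. X x \<in> - B}"]) (auto simp: emeasure_eq_measure)
qed

lemma (in prob_space) prob_Int_atMost_uniform01:
  fixes X :: "'a \<Rightarrow> real"
  assumes X: "distributed M lborel X (indicator {0..1})" and [measurable]: "E \<in> events"
    and cdf: "\<And>v. v \<in> {0..1} \<Longrightarrow> prob (E \<inter> {x\<in>space M. X x \<le> v}) = r * v"
  shows "prob (E \<inter> {x\<in>space M. X x \<le> a}) = r * measure lborel ({..a} \<inter> {0..1})"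
proof -
  have [measurable]: "X \<in> borel_measurable M"
    using distributed_measurable[OF X] by simp
  consider "a < 0" | "a \<in> {0..1}" | "1 < a"
    by force
  then show ?thesis
  proof cases
    case 1
    have "prob (E \<inter> {x\<in>space M. X x \<le> a}) \<le> prob {x\<in>space M. X x \<in> {..a}}"
      by (intro finite_measure_mono) auto
    also have "\<dots> = 0"
      using 1 by (subst prob_uniform01[OF X]) auto
    finally show ?thesis
      using 1 measure_nonneg[of M] by (auto intro: antisym)
  next
    case 2
    then show ?thesis
      using cdf by (simp add: Int_absorb1 Int_commute)
  next
    case 3
    have "{1<..a} \<inter> {0..1} = ({}::real set)"
      by auto
    then have null: "prob {x\<in>space M. X x \<in> {1<..a}} = 0"
      using prob_uniform01[OF X, of "{1<..a}"] by simp
    have "prob (E \<inter> {x\<in>space M. X x \<le> a}) \<le>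
        prob (E \<inter> {x\<in>space M. X x \<le> 1} \<union> {x\<in>space M. X x \<in> {1<..a}})"
      by (intro finite_measure_mono) auto
    also have "\<dots> \<le> prob (E \<inter> {x\<in>space M. X x \<le> 1}) + prob {x\<in>space M. X x \<in> {1<..a}}"
      by (intro measure_Un_le) auto
    finally have "prob (E \<inter> {x\<in>space M. X x \<le> a}) \<le> r"
      using cdf[of 1] null by simp
    moreover have "prob (E \<inter> {x\<in>space M. X x \<le> 1}) \<le> prob (E \<inter> {x\<in>space M. X x \<le> a})"
      using 3 by (intro finite_measure_mono) auto
    ultimately show ?thesis
      using 3 cdf[of 1] by (simp add: Int_absorb1)
  qed
qed

lemma (in prob_space) prob_Int_uniform01:
  fixes X :: "'a \<Rightarrow> real"
  assumes X: "distributed M lborel X (indicator {0..1})" and [measurable]: "E \<in> events"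
    and cdf: "\<And>v. v \<in> {0..1} \<Longrightarrow> prob (E \<inter> {x\<in>space M. X x \<le> v}) = r * v"
    and [measurable]: "B \<in> sets borel"
  shows "prob (E \<inter> {x\<in>space M. X x \<in> B}) = r * measure lborel (B \<inter> {0..1})"
proof -
  have [measurable]: "X \<in> borel_measurable M"
    using distributed_measurable[OF X] by simp
  have r: "0 \<le> r"
    using cdf[of 1] measure_nonneg[of M "E \<inter> {x\<in>space M. X x \<le> 1}"] by simp
  have fin: "S \<inter> {0..1} \<in> fmeasurable lborel" if "S \<in> sets borel" for S :: "real set"
    using that by (intro fmeasurableI2[OF fmeasurable_cbox[of 0 1]]) auto
  define N where "N = density M (indicator E)"
  have emeasure_N: "emeasure N {x\<in>space N. X x \<in> S} = emeasure M (E \<inter> {x\<in>space M. X x \<in> S})"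
    if [measurable]: "S \<in> sets borel" for S
    unfolding N_def by (subst emeasure_restricted) auto
  have "distributed N lborel X (\<lambda>t. ennreal (r * indicator {0..1} t))"
  proof (rule distributedI_borel_atMost[where g="\<lambda>a. r * measure lborel ({..a} \<inter> {0..1})"])
    show "(\<integral>\<^sup>+t. ennreal (r * indicator {0..1} t * indicator {..a} (t::real)) \<partial>lborel) =
        ennreal (r * measure lborel ({..a} \<inter> {0..1}))" for a
    proof -
      have "(\<integral>\<^sup>+t. ennreal (r * indicator {0..1} t * indicator {..a} (t::real)) \<partial>lborel) =
          (\<integral>\<^sup>+t. ennreal r * indicator ({..a} \<inter> {0..1}) t \<partial>lborel)"
        by (intro nn_integral_cong) (auto split: split_indicator)
      also have "\<dots> = ennreal r * emeasure lborel ({..a} \<inter> {0..1})"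
        by (intro nn_integral_cmult_indicator sets.Int) auto
      finally show ?thesis
        using r fin[of "{..a}"] by (simp add: emeasure_eq_measure2 ennreal_mult)
    qed
    show "emeasure N {x\<in>space N. X x \<le> a} = ennreal (r * measure lborel ({..a} \<inter> {0..1}))" for a
      using emeasure_N[of "{..a}"] prob_Int_atMost_uniform01[OF X _ cdf, of a]
      by (simp add: emeasure_eq_measure)
  qed (use r in \<open>auto simp: N_def\<close>)
  then have density_eq: "distr N lborel X = density lborel (\<lambda>t. ennreal (r * indicator {0..1} t))"
    by (rule distributed_distr_eq_density)
  have "emeasure M (E \<inter> {x\<in>space M. X x \<in> B}) = emeasure (distr N lborel X) B"
    using emeasure_N[of B] by (simp add: emeasure_distr vimage_def Int_def conj_commute N_def)
  also have "\<dots> = (\<integral>\<^sup>+t. ennreal r * indicator (B \<inter> {0..1}) t \<partial>lborel)"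
    unfolding density_eq by (subst emeasure_density) (auto intro!: nn_integral_cong split: split_indicator)
  also have "\<dots> = ennreal r * emeasure lborel (B \<inter> {0..1})"
    by (intro nn_integral_cmult_indicator sets.Int) auto
  also have "\<dots> = ennreal (r * measure lborel (B \<inter> {0..1}))"
    using r fin[of B] by (simp add: emeasure_eq_measure2 ennreal_mult)
  finally show ?thesis
    using r by (simp add: emeasure_eq_measure)
qed

section \<open>Frechet-Hoeffding bounds on two slabs\<close>

lemma frechet_deviation_le:
  fixes a c v m p :: real
  assumes "0 \<le> v" "v \<le> 1"
    and "v * p \<le> a" "a \<le> v * m" "(1 - v) * p \<le> c - a" "c - a \<le> (1 - v) * m"
  shows "\<bar>a - v * c\<bar> \<le> v * (1 - v) * (m - p)"
proof -
  have split: "a - v * c = (1 - v) * a - v * (c - a)"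
    by (simp add: algebra_simps)
  have "(1 - v) * (v * p) \<le> (1 - v) * a" "(1 - v) * a \<le> (1 - v) * (v * m)"
    "v * ((1 - v) * p) \<le> v * (c - a)" "v * (c - a) \<le> v * ((1 - v) * m)"
    using assms by (auto intro: mult_left_mono)
  then show ?thesis
    unfolding split abs_le_iff by (simp add: algebra_simps)
qed

lemma frechet_width_le_half:
  fixes u1 u2 :: real
  assumes "u1 \<in> {0..1}" "u2 \<in> {0..1}"
  shows "min u1 u2 - max 0 (u1 + u2 - 1) \<le> 1/2"
    and "min u1 u2 - max 0 (u1 + u2 - 1) = 1/2 \<Longrightarrow> u1 = 1/2 \<and> u2 = 1/2"
  using assms by (auto simp: min_def max_def split: if_splits)

lemma mult_one_minus_le_quarter:
  fixes v :: real
  shows "v * (1 - v) \<le> 1/4" and "v * (1 - v) = 1/4 \<Longrightarrow> v = 1/2"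
proof -
  have "v * (1 - v) = 1/4 - (v - 1/2)^2"
    by (simp add: power2_eq_square algebra_simps)
  then show "v * (1 - v) \<le> 1/4" and "v * (1 - v) = 1/4 \<Longrightarrow> v = 1/2"
    by simp_all
qed

lemma frechet_deviation_le_one_eighth:
  fixes a c u1 u2 v :: real
  defines "m \<equiv> min u1 u2" and "p \<equiv> max 0 (u1 + u2 - 1)"
  assumes "u1 \<in> {0..1}" "u2 \<in> {0..1}" "v \<in> {0..1}"
    and "v * p \<le> a" "a \<le> v * m" "(1 - v) * p \<le> c - a" "c - a \<le> (1 - v) * m"
  shows "\<bar>a - v * c\<bar> \<le> 1/8"
    and "\<bar>a - v * c\<bar> = 1/8 \<Longrightarrow> u1 = 1/2 \<and> u2 = 1/2 \<and> v = 1/2"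
proof -
  have dev: "\<bar>a - v * c\<bar> \<le> v * (1 - v) * (m - p)"
    using assms(5-) by (intro frechet_deviation_le) auto
  have w: "0 \<le> v * (1 - v)" "v * (1 - v) \<le> 1/4"
    using assms(5) mult_one_minus_le_quarter(1) by auto
  have d: "0 \<le> m - p" "m - p \<le> 1/2"
    using assms(3,4) frechet_width_le_half(1) unfolding m_def p_def by (auto simp: min_def max_def)
  have prod: "v * (1 - v) * (m - p) \<le> 1/4 * (m - p)" "v * (1 - v) * (m - p) \<le> v * (1 - v) * (1/2)"
    using mult_right_mono[OF w(2) d(1)] mult_left_mono[OF d(2) w(1)] by simp_all
  then show "\<bar>a - v * c\<bar> \<le> 1/8"
    using dev d by argo
  assume "\<bar>a - v * c\<bar> = 1/8"
  with dev prod w d have "v * (1 - v) = 1/4" "m - p = 1/2"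
    by argo+
  then show "u1 = 1/2 \<and> u2 = 1/2 \<and> v = 1/2"
    using assms(3,4) frechet_width_le_half(2) mult_one_minus_le_quarter(2) unfolding m_def p_def by blast
qed

section \<open>Copula measures on the unit cube\<close>

definition cdf3 :: "(real \<times> real \<times> real) measure \<Rightarrow> real \<times> real \<times> real \<Rightarrow> real" where
  "cdf3 M x = measure M ({0..fst x} \<times> {0..fst (snd x)} \<times> {0..snd (snd x)})"

(* |C - psi(C)| at x when C belongs to F^3_Pi, see psi_eq *)
definition indep_gap :: "(real \<times> real \<times> real) measure \<Rightarrow> real \<times> real \<times> real \<Rightarrow> real" where
  "indep_gap M x = \<bar>cdf3 M x - snd (snd x) * cdf3 M (fst x, fst (snd x), 1)\<bar>"

definition half_interval :: "bool \<Rightarrow> real set" where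
  "half_interval b = (if b then {1/2<..<1} else {0<..<1/2})"

definition subcube :: "bool \<times> bool \<times> bool \<Rightarrow> (real \<times> real \<times> real) set" where
  "subcube q = half_interval (fst q) \<times> half_interval (fst (snd q)) \<times> half_interval (snd (snd q))"

lemma borel_subcube [simp]: "subcube q \<in> sets borel"
  by (simp add: subcube_def half_interval_def)

lemma mem_half_interval_iff: "t \<in> half_interval b \<longleftrightarrow> t \<in> {0<..<1/2} \<union> {1/2<..<1} \<and> b = (1/2 < t)"
  by (auto simp: half_interval_def)

lemma mem_subcube_iff:
  "x \<in> subcube q \<longleftrightarrow>
    (\<forall>t\<in>{fst x, fst (snd x), snd (snd x)}. t \<in> {0<..<1/2} \<union> {1/2<..<1}) \<and>
    q = (1/2 < fst x, 1/2 < fst (snd x), 1/2 < snd (snd x))"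
  by (cases x; cases q) (simp add: subcube_def mem_half_interval_iff del: Un_iff greaterThanLessThan_iff, blast)

lemma Icc_Int_half_interval:
  "{0..1} \<inter> half_interval b = half_interval b"
  "{0..1/2} \<inter> half_interval b = (if b then {} else half_interval b)"
  by (auto simp: half_interval_def)

lemma sum_UNIV_bool3:
  "(\<Sum>q\<in>UNIV. f q) =
    f (False, False, False) + f (False, False, True) + f (False, True, False) + f (False, True, True) +
    f (True, False, False) + f (True, False, True) + f (True, True, False) + f (True, True, True)"
  by (simp add: UNIV_Times_UNIV[symmetric] UNIV_bool sum.cartesian_product[symmetric] add.assoc
      del: UNIV_Times_UNIV)

locale copula_space3 = prob_space M for M :: "(real \<times> real \<times> real) measure" +
  assumes sets_M [measurable_cong]: "sets M = sets borel"
    and emeasure_unit_cube3: "emeasure M unit_cube3 = 1"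
    and marginal1: "\<And>u. u \<in> {0..1} \<Longrightarrow> measure M {x. fst x \<le> u} = u"
    and marginal2: "\<And>u. u \<in> {0..1} \<Longrightarrow> measure M {x. fst (snd x) \<le> u} = u"
    and marginal3: "\<And>u. u \<in> {0..1} \<Longrightarrow> measure M {x. snd (snd x) \<le> u} = u"

lemma copula_space3I: "copula_measure3 M \<Longrightarrow> copula_space3 M"
  unfolding copula_measure3_def copula_space3_def copula_space3_axioms_def by auto

context copula_space3
begin

lemma space_M [simp]: "space M = UNIV"
  using sets_eq_imp_space_eq[OF sets_M] by simp

lemma borel_in_sets_M [intro, simp]: "X \<in> sets borel \<Longrightarrow> X \<in> sets M"
  by (simp add: sets_M)

lemma measure_Int_unit_cube3:
  assumes "X \<in> sets borel"
  shows "measure M (X \<inter> unit_cube3) = measure M X"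
proof -
  have [measurable]: "unit_cube3 \<in> sets borel"
    unfolding unit_cube3_def by (intro borel_Times borel_closed) auto
  have "AE x in M. x \<in> unit_cube3"
    using emeasure_unit_cube3 by (intro AE_prob_1) (auto simp: emeasure_eq_measure)
  then show ?thesis
    using assms by (intro finite_measure_eq_AE) auto
qed

lemma measure_eq_on_unit_cube3:
  assumes "X \<in> sets borel" "Y \<in> sets borel" "X \<inter> unit_cube3 = Y \<inter> unit_cube3"
  shows "measure M X = measure M Y"
  using measure_Int_unit_cube3 assms by metis

lemma uniform_marginal1: "distributed M lborel (\<lambda>x. fst x) (indicator {0..1})"
  by (rule distributed_uniform01I, measurable) (simp add: marginal1)

lemma uniform_marginal2: "distributed M lborel (\<lambda>x. fst (snd x)) (indicator {0..1})"
  by (rule distributed_uniform01I, measurable) (simp add: marginal2)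

lemma uniform_marginal3: "distributed M lborel (\<lambda>x. snd (snd x)) (indicator {0..1})"
  by (rule distributed_uniform01I, measurable) (simp add: marginal3)

lemma cdf3_sub_le:
  "cdf3 M x - cdf3 M y \<le> \<bar>fst x - fst y\<bar> + \<bar>fst (snd x) - fst (snd y)\<bar> + \<bar>snd (snd x) - snd (snd y)\<bar>"
proof -
  define S1 :: "(real \<times> real \<times> real) set" where "S1 = {z. fst y < fst z \<and> fst z \<le> fst x}"
  define S2 :: "(real \<times> real \<times> real) set" where "S2 = {z. fst (snd y) < fst (snd z) \<and> fst (snd z) \<le> fst (snd x)}"
  define S3 :: "(real \<times> real \<times> real) set" where "S3 = {z. snd (snd y) < snd (snd z) \<and> snd (snd z) \<le> snd (snd x)}"
  have [measurable]: "S1 \<in> sets M" "S2 \<in> sets M" "S3 \<in> sets M"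
    unfolding S1_def S2_def S3_def by measurable
  let ?box = "\<lambda>x. {0..fst x} \<times> {0..fst (snd x)} \<times> {0..snd (snd x)}"
  have "cdf3 M x - cdf3 M y \<le> measure M (?box x - ?box y)"
    unfolding cdf3_def using finite_measure_Diff'[of "?box x" "?box y"]
      finite_measure_mono[of "?box x \<inter> ?box y" "?box y"] by simp
  also have "\<dots> \<le> measure M (S1 \<union> S2 \<union> S3)"
    by (intro finite_measure_mono) (auto simp: S1_def S2_def S3_def)
  also have "\<dots> \<le> measure M S1 + measure M S2 + measure M S3"
    using measure_Un_le[of "S1 \<union> S2" M S3] measure_Un_le[of S1 M S2] by simp
  also have "\<dots> \<le> \<bar>fst x - fst y\<bar> + \<bar>fst (snd x) - fst (snd y)\<bar> + \<bar>snd (snd x) - snd (snd y)\<bar>"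
    using prob_uniform01_Ioc_le[OF uniform_marginal1, of "fst y" "fst x"]
      prob_uniform01_Ioc_le[OF uniform_marginal2, of "fst (snd y)" "fst (snd x)"]
      prob_uniform01_Ioc_le[OF uniform_marginal3, of "snd (snd y)" "snd (snd x)"]
    unfolding S1_def S2_def S3_def by simp
  finally show ?thesis .
qed

lemma lipschitz_on_cdf3: "lipschitz_on 3 UNIV (cdf3 M)"
proof (rule lipschitz_onI)
  fix x y :: "real \<times> real \<times> real"
  have "\<bar>fst x - fst y\<bar> \<le> dist x y" "\<bar>fst (snd x) - fst (snd y)\<bar> \<le> dist x y"
    "\<bar>snd (snd x) - snd (snd y)\<bar> \<le> dist x y"
    using dist_fst_le[of x y] dist_snd_le[of x y] dist_fst_le[of "snd x" "snd y"]
      dist_snd_le[of "snd x" "snd y"] by (auto simp: dist_real_def)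
  moreover have "\<bar>cdf3 M x - cdf3 M y\<bar> \<le>
      \<bar>fst x - fst y\<bar> + \<bar>fst (snd x) - fst (snd y)\<bar> + \<bar>snd (snd x) - snd (snd y)\<bar>"
    using cdf3_sub_le[of x y] cdf3_sub_le[of y x] by (simp add: abs_le_iff abs_minus_commute)
  ultimately show "dist (cdf3 M x) (cdf3 M y) \<le> 3 * dist x y"
    by (simp add: dist_real_def)
qed simp

lemma continuous_on_cdf3: "continuous_on S (cdf3 M)"
  using lipschitz_on_continuous_on[OF lipschitz_on_cdf3] continuous_on_subset by blast

lemma measure_eq_sum_subcubes:
  assumes "X \<in> sets borel"
  shows "measure M X = (\<Sum>q\<in>UNIV. measure M (X \<inter> subcube q))"
proof -
  let ?H = "{0<..<1/2} \<union> {1/2<..<1} :: real set"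
  have H: "?H \<in> sets borel" "finite ({0..1} - ?H)"
    by (auto intro: finite_subset[of _ "{0, 1/2, 1}"])
  have "AE x in M. fst x \<in> ?H" "AE x in M. fst (snd x) \<in> ?H" "AE x in M. snd (snd x) \<in> ?H"
    using AE_uniform01[OF uniform_marginal1 H] AE_uniform01[OF uniform_marginal2 H]
      AE_uniform01[OF uniform_marginal3 H] by auto
  then have "AE x in M. x \<in> X \<longleftrightarrow> x \<in> (\<Union>q. X \<inter> subcube q)"
    by eventually_elim (auto simp: mem_subcube_iff simp del: Un_iff greaterThanLessThan_iff)
  then have "measure M X = measure M (\<Union>q. X \<inter> subcube q)"
  proof (rule finite_measure_eq_AE)
    show "(\<Union>q. X \<inter> subcube q) \<in> sets M"
      using assms by (intro sets.countable_UN') auto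
  qed (use assms in auto)
  also have "\<dots> = (\<Sum>q\<in>UNIV. measure M (X \<inter> subcube q))"
    using assms by (intro finite_measure_finite_Union) (auto simp: disjoint_family_on_def mem_subcube_iff)
  finally show ?thesis .
qed

lemma measure_atMost_eq_cdf3:
  "measure M {..a} =
    (if 0 \<le> fst a \<and> 0 \<le> fst (snd a) \<and> 0 \<le> snd (snd a)
     then cdf3 M (min (fst a) 1, min (fst (snd a)) 1, min (snd (snd a)) 1) else 0)"
proof -
  have "measure M {..a} = measure M ({..a} \<inter> unit_cube3)"
    by (simp add: measure_Int_unit_cube3)
  also have "{..a} \<inter> unit_cube3 =
      (if 0 \<le> fst a \<and> 0 \<le> fst (snd a) \<and> 0 \<le> snd (snd a)
       then ({0..min (fst a) 1} \<times> {0..min (fst (snd a)) 1} \<times> {0..min (snd (snd a)) 1}) \<inter> unit_cube3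
       else {})"
    by (auto simp: unit_cube3_def less_eq_prod_def)
  finally show ?thesis
    by (auto simp: cdf3_def measure_Int_unit_cube3 split: if_splits)
qed

lemma distr_third_eq_uniform01:
  "distr M borel (\<lambda>x. snd (snd x)) = density lborel (indicator {0..1})"
proof -
  have "distr M borel (\<lambda>x. snd (snd x)) = distr M lborel (\<lambda>x. snd (snd x))"
    by (rule distr_cong) auto
  also have "\<dots> = density lborel (indicator {0..1})"
    by (rule distributed_distr_eq_density[OF uniform_marginal3])
  finally show ?thesis .
qed

lemma measure_pair_indep_third:
  assumes [measurable]: "A \<in> sets borel" "B \<in> sets borel"
    and "\<And>v. v \<in> {0..1} \<Longrightarrow> measure M {x. (fst x, fst (snd x)) \<in> A \<and> snd (snd x) \<le> v} = r * v"
  shows "measure M {x. (fst x, fst (snd x)) \<in> A \<and> snd (snd x) \<in> B} = r * measure lborel (B \<inter> {0..1})"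
proof -
  have [simp]: "{x. (fst x, fst (snd x)) \<in> A} \<inter> {x. P x} = {x. (fst x, fst (snd x)) \<in> A \<and> P x}" for P
    by auto
  show ?thesis
    using prob_Int_uniform01[OF uniform_marginal3, of "{x. (fst x, fst (snd x)) \<in> A}" r B] assms
    by simp
qed

lemma measure_reg_cond_dist:
  assumes "reg_cond_dist M K" "A \<in> sets borel" "B \<in> sets borel"
  shows "measure M {x. (fst x, fst (snd x)) \<in> A \<and> snd (snd x) \<in> B} =
    set_lebesgue_integral (density lborel (indicator {0..1})) B (\<lambda>t. measure (K t) A)"
  using assms unfolding reg_cond_dist_def distr_third_eq_uniform01 by simp

lemma AE_cond_measure_eq:
  assumes K: "reg_cond_dist M K" and [measurable]: "A \<in> sets borel"
    and indep: "\<And>B. B \<in> sets borel \<Longrightarrow>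
      measure M {x. (fst x, fst (snd x)) \<in> A \<and> snd (snd x) \<in> B} = r * measure lborel (B \<inter> {0..1})"
  shows "AE t in lborel. t \<in> {0..1} \<longrightarrow> measure (K t) A = r"
proof -
  let ?U = "density lborel (indicator {0..1}) :: real measure"
  let ?g = "\<lambda>t. measure (K t) A"
  interpret U: prob_space ?U
    unfolding distr_third_eq_uniform01[symmetric] by (rule prob_space_distr) simp
  have g [measurable]: "?g \<in> borel_measurable borel"
    using K by (simp add: reg_cond_dist_def)
  have measure_U: "measure ?U B = measure lborel (B \<inter> {0..1})" if "B \<in> sets borel" for B
    using that by (simp add: measure_def emeasure_restricted Int_commute)
  have "AE t in ?U. ?g t = r"
  proof (rule density_unique_real)
    show "integrable ?U ?g"
      using K by (intro U.integrable_const_bound[where B=1]) (auto simp: reg_cond_dist_def intro!: prob_space.prob_le_1)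
    fix B assume "B \<in> sets ?U"
    then have [measurable]: "B \<in> sets borel"
      by simp
    have "set_lebesgue_integral ?U B ?g = measure M {x. (fst x, fst (snd x)) \<in> A \<and> snd (snd x) \<in> B}"
      using measure_reg_cond_dist[OF K] by simp
    also have "\<dots> = set_lebesgue_integral ?U B (\<lambda>t. r)"
      by (simp add: indep measure_U set_integral_const U.emeasure_eq_measure)
    finally show "set_lebesgue_integral ?U B ?g = set_lebesgue_integral ?U B (\<lambda>t. r)" .
  qed simp
  then show ?thesis
    by (subst (asm) AE_density) (auto elim!: AE_mp simp: indicator_def)
qed

end

lemma copula_space3_eqI:
  assumes "copula_space3 M" "copula_space3 N" and "\<And>x. x \<in> unit_cube3 \<Longrightarrow> cdf3 M x = cdf3 N x"
  shows "M = N"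
proof (rule measure_eqI_atMost)
  interpret M: copula_space3 M by fact
  interpret N: copula_space3 N by fact
  show "finite_measure M" "sets M = sets borel" "sets N = sets borel"
    by (simp_all add: M.finite_measure_axioms M.sets_M N.sets_M)
  have "measure M {..a} = measure N {..a}" for a
    unfolding M.measure_atMost_eq_cdf3 N.measure_atMost_eq_cdf3
    by (auto intro!: assms(3) simp: unit_cube3_def)
  then show "emeasure M {..a} = emeasure N {..a}" for a
    by (simp add: M.emeasure_eq_measure N.emeasure_eq_measure)
qed

lemma mu_C_eqI:
  assumes "copula_measure3 M" and "is_cdf3_of C M"
  shows "mu_C C = M"
  unfolding mu_C_def
proof (rule the_equality)
  fix N assume "copula_measure3 N \<and> is_cdf3_of C N"
  then show "N = M"
    using assms by (intro copula_space3_eqI copula_space3I) (auto simp: is_cdf3_of_def cdf3_def)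
qed (use assms in simp)

section \<open>Copulas whose margins C_13 and C_23 are independence copulas\<close>

locale copula_space3_Pi = copula_space3 +
  assumes cdf3_13: "\<And>u v. u \<in> {0..1} \<Longrightarrow> v \<in> {0..1} \<Longrightarrow> cdf3 M (u, 1, v) = u * v"
    and cdf3_23: "\<And>u v. u \<in> {0..1} \<Longrightarrow> v \<in> {0..1} \<Longrightarrow> cdf3 M (1, u, v) = u * v"

context copula_space3_Pi
begin

lemma measure_slab1:
  assumes "u \<in> {0..1}" "S \<in> sets borel"
  shows "measure M ({0..u} \<times> {0..1} \<times> S) = u * measure lborel (S \<inter> {0..1})"
proof -
  have slab: "{0..u} \<times> {0..1} \<times> S = {x. (fst x, fst (snd x)) \<in> {0..u} \<times> {0..1} \<and> snd (snd x) \<in> S}"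
    by auto
  show ?thesis
    unfolding slab
  proof (rule measure_pair_indep_third)
    fix v :: real assume "v \<in> {0..1}"
    then show "measure M {x. (fst x, fst (snd x)) \<in> {0..u} \<times> {0..1} \<and> snd (snd x) \<le> v} = u * v"
      using assms cdf3_13[of u v] unfolding cdf3_def
      by (subst measure_eq_on_unit_cube3[where Y="{0..u} \<times> {0..1} \<times> {0..v}"])
        (auto simp: unit_cube3_def)
  qed (use assms in auto)
qed

lemma measure_slab2:
  assumes "u \<in> {0..1}" "S \<in> sets borel"
  shows "measure M ({0..1} \<times> {0..u} \<times> S) = u * measure lborel (S \<inter> {0..1})"
proof -
  have slab: "{0..1} \<times> {0..u} \<times> S = {x. (fst x, fst (snd x)) \<in> {0..1} \<times> {0..u} \<and> snd (snd x) \<in> S}"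
    by auto
  show ?thesis
    unfolding slab
  proof (rule measure_pair_indep_third)
    fix v :: real assume "v \<in> {0..1}"
    then show "measure M {x. (fst x, fst (snd x)) \<in> {0..1} \<times> {0..u} \<and> snd (snd x) \<le> v} = u * v"
      using assms cdf3_23[of u v] unfolding cdf3_def
      by (subst measure_eq_on_unit_cube3[where Y="{0..1} \<times> {0..u} \<times> {0..v}"])
        (auto simp: unit_cube3_def)
  qed (use assms in auto)
qed

lemma frechet_bounds_slab:
  assumes "u1 \<in> {0..1}" "u2 \<in> {0..1}" "S \<in> sets borel"
  defines "s \<equiv> measure lborel (S \<inter> {0..1})"
  shows "s * max 0 (u1 + u2 - 1) \<le> measure M ({0..u1} \<times> {0..u2} \<times> S)"
    and "measure M ({0..u1} \<times> {0..u2} \<times> S) \<le> s * min u1 u2"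
proof -
  let ?A = "{0..u1} \<times> {0..1} \<times> S" and ?B = "{0..1} \<times> {0..u2} \<times> S"
  have AB: "?A \<inter> ?B = {0..u1} \<times> {0..u2} \<times> S"
    using assms(1,2) by auto
  have A: "measure M ?A = u1 * s" and B: "measure M ?B = u2 * s" and T: "measure M ({0..1} \<times> {0..1} \<times> S) = s"
    using measure_slab1[of u1 S] measure_slab2[of u2 S] measure_slab1[of 1 S] assms by auto
  have "measure M ?A + measure M ?B - measure M ({0..1} \<times> {0..1} \<times> S) \<le> measure M (?A \<inter> ?B)"
    using assms by (intro finite_measure_Int_ge) auto
  moreover have "measure M (?A \<inter> ?B) \<le> measure M ?A" "measure M (?A \<inter> ?B) \<le> measure M ?B"
    using assms by (auto intro!: finite_measure_mono)
  ultimately show "s * max 0 (u1 + u2 - 1) \<le> measure M ({0..u1} \<times> {0..u2} \<times> S)"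
    and "measure M ({0..u1} \<times> {0..u2} \<times> S) \<le> s * min u1 u2"
    unfolding AB A B T by (auto simp: max_def min_def algebra_simps)
qed

lemma indep_gap_le_one_eighth:
  assumes "x \<in> unit_cube3"
  shows "indep_gap M x \<le> 1/8" and "indep_gap M x = 1/8 \<Longrightarrow> x = (1/2, 1/2, 1/2)"
proof -
  obtain u1 u2 v where x: "x = (u1, u2, v)" and u: "u1 \<in> {0..1}" "u2 \<in> {0..1}" "v \<in> {0..1}"
    using assms by (cases x) (auto simp: unit_cube3_def)
  define a where "a = cdf3 M (u1, u2, v)"
  define c where "c = cdf3 M (u1, u2, 1)"
  have "{0..u1} \<times> {0..u2} \<times> {v<..1} = {0..u1} \<times> {0..u2} \<times> {0..1} - {0..u1} \<times> {0..u2} \<times> {0..v}"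
    using u(3) by auto
  also have "measure M \<dots> = c - a"
    unfolding a_def c_def cdf3_def fst_conv snd_conv using u(3)
    by (intro finite_measure_Diff) (auto intro!: Sigma_mono)
  finally have upper_box: "measure M ({0..u1} \<times> {0..u2} \<times> {v<..1}) = c - a" .
  have "measure lborel ({0..v} \<inter> {0..1}) = v" "measure lborel ({v<..1} \<inter> {0..1}) = 1 - v"
    using u(3) by (simp_all add: Int_absorb2 subset_eq)
  then have "v * max 0 (u1 + u2 - 1) \<le> a" "a \<le> v * min u1 u2"
    "(1 - v) * max 0 (u1 + u2 - 1) \<le> c - a" "c - a \<le> (1 - v) * min u1 u2"
    using frechet_bounds_slab[OF u(1,2), of "{0..v}"] frechet_bounds_slab[OF u(1,2), of "{v<..1}"]
    unfolding upper_box by (simp_all add: a_def cdf3_def)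
  note frechet = frechet_deviation_le_one_eighth[OF u this]
  have gap: "indep_gap M x = \<bar>a - v * c\<bar>"
    by (simp add: indep_gap_def x a_def c_def)
  show "indep_gap M x \<le> 1/8"
    unfolding gap by (rule frechet(1))
  assume "indep_gap M x = 1/8"
  then have "u1 = 1/2 \<and> u2 = 1/2 \<and> v = 1/2"
    unfolding gap by (rule frechet(2))
  then show "x = (1/2, 1/2, 1/2)"
    by (simp add: x)
qed

lemma continuous_on_indep_gap: "continuous_on S (indep_gap M)"
proof -
  have "continuous_on S (\<lambda>x. (fst x, fst (snd x), 1::real))"
    by (intro continuous_intros)
  then have "continuous_on S (\<lambda>x. cdf3 M (fst x, fst (snd x), 1))"
    using continuous_on_compose[of S "\<lambda>x. (fst x, fst (snd x), 1::real)" "cdf3 M"] continuous_on_cdf3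
    by (simp add: o_def)
  then show ?thesis
    unfolding indep_gap_def by (intro continuous_intros continuous_on_cdf3)
qed

lemma SUP_indep_gap:
  "(SUP x\<in>unit_cube3. indep_gap M x) \<le> 1/8"
  "(SUP x\<in>unit_cube3. indep_gap M x) = 1/8 \<longleftrightarrow> indep_gap M (1/2, 1/2, 1/2) = 1/8"
proof -
  have cube: "compact unit_cube3" "unit_cube3 \<noteq> {}"
    unfolding unit_cube3_def by (simp_all add: compact_Times)
  obtain x0 where x0: "x0 \<in> unit_cube3" and max: "\<And>y. y \<in> unit_cube3 \<Longrightarrow> indep_gap M y \<le> indep_gap M x0"
    using continuous_attains_sup[OF cube continuous_on_indep_gap] by blast
  have sup: "(SUP x\<in>unit_cube3. indep_gap M x) = indep_gap M x0"
    using x0 max by (intro cSup_eq_maximum) auto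
  show "(SUP x\<in>unit_cube3. indep_gap M x) \<le> 1/8"
    unfolding sup using x0 by (rule indep_gap_le_one_eighth(1))
  have centre: "(1/2, 1/2, 1/2) \<in> unit_cube3"
    by (simp add: unit_cube3_def)
  show "(SUP x\<in>unit_cube3. indep_gap M x) = 1/8 \<longleftrightarrow> indep_gap M (1/2, 1/2, 1/2) = 1/8"
    unfolding sup
  proof
    assume gap: "indep_gap M x0 = 1/8"
    then have "x0 = (1/2, 1/2, 1/2)"
      by (rule indep_gap_le_one_eighth(2)[OF x0])
    with gap show "indep_gap M (1/2, 1/2, 1/2) = 1/8"
      by simp
  next
    assume "indep_gap M (1/2, 1/2, 1/2) = 1/8"
    with max[OF centre] indep_gap_le_one_eighth(1)[OF x0] show "indep_gap M x0 = 1/8"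
      by simp
  qed
qed

lemma indep_gap_centre_eq_iff:
  "indep_gap M (1/2, 1/2, 1/2) = 1/8 \<longleftrightarrow>
    (measure M ({0<..<1/2} \<times> {0<..<1/2} \<times> {0<..<1/2}) = 1/4 \<and>
     measure M ({0<..<1/2} \<times> {1/2<..<1} \<times> {1/2<..<1}) = 1/4 \<and>
     measure M ({1/2<..<1} \<times> {1/2<..<1} \<times> {0<..<1/2}) = 1/4 \<and>
     measure M ({1/2<..<1} \<times> {0<..<1/2} \<times> {1/2<..<1}) = 1/4) \<or>
    (measure M ({0<..<1/2} \<times> {0<..<1/2} \<times> {1/2<..<1}) = 1/4 \<and>
     measure M ({0<..<1/2} \<times> {1/2<..<1} \<times> {0<..<1/2}) = 1/4 \<and>
     measure M ({1/2<..<1} \<times> {1/2<..<1} \<times> {1/2<..<1}) = 1/4 \<and>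
     measure M ({1/2<..<1} \<times> {0<..<1/2} \<times> {0<..<1/2}) = 1/4)"
proof -
  define q where "q i j k = measure M (half_interval i \<times> half_interval j \<times> half_interval k)" for i j k
  have cdf3_sum: "cdf3 M (a, b, c) = (\<Sum>q\<in>UNIV. measure M (({0..a} \<inter> half_interval (fst q)) \<times>
      ({0..b} \<inter> half_interval (fst (snd q))) \<times> ({0..c} \<inter> half_interval (snd (snd q)))))" for a b c
    using measure_eq_sum_subcubes[of "{0..a} \<times> {0..b} \<times> {0..c}"]
    by (simp add: cdf3_def subcube_def Times_Int_Times)
  note cdf3_cells = cdf3_sum[unfolded sum_UNIV_bool3 fst_conv snd_conv]
  have cells: "cdf3 M (1/2, 1/2, 1/2) = q False False False"
    "cdf3 M (1/2, 1/2, 1) = q False False False + q False False True"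
    "q False False False + q False True False = 1/4"
    "q False False False + q True False False = 1/4"
    "q False False False + q False False True + q False True False + q False True True = 1/2"
    "q False False False + q False True False + q True False False + q True True False = 1/2"
    "q False False False + q False False True + q True False False + q True False True = 1/2"
    "q False False False + q False False True + q False True False + q False True True +
     q True False False + q True False True + q True True False + q True True True = 1"
    using cdf3_cells[of "1/2" "1/2" "1/2"] cdf3_cells[of "1/2" "1/2" 1]
      cdf3_cells[of "1/2" 1 "1/2"] cdf3_13[of "1/2" "1/2"] cdf3_cells[of 1 "1/2" "1/2"] cdf3_23[of "1/2" "1/2"]
      cdf3_cells[of "1/2" 1 1] cdf3_13[of "1/2" 1] cdf3_cells[of 1 1 "1/2"] cdf3_13[of 1 "1/2"]
      cdf3_cells[of 1 "1/2" 1] cdf3_23[of "1/2" 1] cdf3_cells[of 1 1 1] cdf3_13[of 1 1]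
    by (simp_all add: Icc_Int_half_interval q_def add.assoc)
  have gap: "indep_gap M (1/2, 1/2, 1/2) = \<bar>q False False False - 1/2 * (q False False False + q False False True)\<bar>"
    using cells(1,2) by (simp add: indep_gap_def)
  have q_sets:
    "measure M ({0<..<1/2} \<times> {0<..<1/2} \<times> {0<..<1/2}) = q False False False"
    "measure M ({0<..<1/2} \<times> {0<..<1/2} \<times> {1/2<..<1}) = q False False True"
    "measure M ({0<..<1/2} \<times> {1/2<..<1} \<times> {0<..<1/2}) = q False True False"
    "measure M ({0<..<1/2} \<times> {1/2<..<1} \<times> {1/2<..<1}) = q False True True"
    "measure M ({1/2<..<1} \<times> {0<..<1/2} \<times> {0<..<1/2}) = q True False False"
    "measure M ({1/2<..<1} \<times> {0<..<1/2} \<times> {1/2<..<1}) = q True False True"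
    "measure M ({1/2<..<1} \<times> {1/2<..<1} \<times> {0<..<1/2}) = q True True False"
    "measure M ({1/2<..<1} \<times> {1/2<..<1} \<times> {1/2<..<1}) = q True True True"
    by (simp_all add: q_def half_interval_def)
  have nonneg: "0 \<le> q i j k" for i j k
    by (simp add: q_def)
  show ?thesis
    unfolding gap q_sets using cells(3-)
      nonneg[of False False False] nonneg[of False False True] nonneg[of False True False]
      nonneg[of False True True] nonneg[of True False False] nonneg[of True False True]
      nonneg[of True True False] nonneg[of True True True]
    by argo
qed

lemma AE_cond_marg1:
  assumes "reg_cond_dist M K" "u \<in> {0..1}"
  shows "AE t in lborel. t \<in> {0..1} \<longrightarrow> cond_marg1 K u t = u"
  unfolding cond_marg1_def
proof (rule AE_cond_measure_eq[OF assms(1)])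
  fix B :: "real set" assume "B \<in> sets borel"
  have slab: "{x. (fst x, fst (snd x)) \<in> {0..u} \<times> {0..1} \<and> snd (snd x) \<in> B} = {0..u} \<times> {0..1} \<times> B"
    by auto
  show "measure M {x. (fst x, fst (snd x)) \<in> {0..u} \<times> {0..1} \<and> snd (snd x) \<in> B} =
      u * measure lborel (B \<inter> {0..1})"
    unfolding slab by (rule measure_slab1) fact+
qed simp

lemma AE_cond_marg2:
  assumes "reg_cond_dist M K" "u \<in> {0..1}"
  shows "AE t in lborel. t \<in> {0..1} \<longrightarrow> cond_marg2 K u t = u"
  unfolding cond_marg2_def
proof (rule AE_cond_measure_eq[OF assms(1)])
  fix B :: "real set" assume "B \<in> sets borel"
  have slab: "{x. (fst x, fst (snd x)) \<in> {0..1} \<times> {0..u} \<and> snd (snd x) \<in> B} = {0..1} \<times> {0..u} \<times> B"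
    by auto
  show "measure M {x. (fst x, fst (snd x)) \<in> {0..1} \<times> {0..u} \<and> snd (snd x) \<in> B} =
      u * measure lborel (B \<inter> {0..1})"
    unfolding slab by (rule measure_slab2) fact+
qed simp

lemma partial_copula_eq_cdf3:
  assumes K: "reg_cond_dist M K" and "cond_copula K Ct" and u: "u1 \<in> {0..1}" "u2 \<in> {0..1}"
  shows "partial_copula Ct (u1, u2) = cdf3 M (u1, u2, 1)"
proof -
  let ?A = "{0..u1} \<times> {0..u2} :: (real \<times> real) set"
  let ?g = "\<lambda>t. measure (K t) ?A"
  have [measurable]: "?g \<in> borel_measurable borel"
    using K by (simp add: reg_cond_dist_def)
  have "AE t in lborel. t \<in> {0..1} \<longrightarrow> Ct t (u1, u2) = ?g t"
    using assms(2)[unfolded cond_copula_def] AE_cond_marg1[OF K u(1)] AE_cond_marg2[OF K u(2)]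
    by eventually_elim (use u in auto)
  then have "partial_copula Ct (u1, u2) = set_lebesgue_integral lborel {0..1} ?g"
    unfolding partial_copula_def by (intro set_integral_lebesgue_eq_lborel_AE) auto
  also have "\<dots> = integral\<^sup>L (density lborel (\<lambda>t. ennreal (indicator {0..1} t))) ?g"
    by (subst integral_density) (auto simp: set_lebesgue_integral_def)
  also have "\<dots> = integral\<^sup>L (density lborel (indicator {0..1})) ?g"
    by (simp add: ennreal_indicator)
  also have "\<dots> = measure M {x. (fst x, fst (snd x)) \<in> ?A \<and> snd (snd x) \<in> UNIV}"
    using measure_reg_cond_dist[OF K, of ?A UNIV] by (simp add: set_lebesgue_integral_def)
  also have "\<dots> = cdf3 M (u1, u2, 1)"
    unfolding cdf3_def using u
    by (intro measure_eq_on_unit_cube3) (auto simp: unit_cube3_def)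
  finally show ?thesis .
qed

lemma psi_eq:
  assumes K: "reg_cond_dist M K" and "cond_copula K Ct" and x: "x \<in> unit_cube3"
  shows "psi K Ct x = snd (snd x) * cdf3 M (fst x, fst (snd x), 1)"
proof -
  have u: "fst x \<in> {0..1}" "fst (snd x) \<in> {0..1}" "snd (snd x) \<in> {0..1}"
    using x by (auto simp: unit_cube3_def)
  have "AE t in lborel. t \<in> {0..snd (snd x)} \<longrightarrow>
      partial_copula Ct (cond_marg1 K (fst x) t, cond_marg2 K (fst (snd x)) t) = cdf3 M (fst x, fst (snd x), 1)"
    using AE_cond_marg1[OF K u(1)] AE_cond_marg2[OF K u(2)]
    by eventually_elim (use u partial_copula_eq_cdf3[OF assms(1,2) u(1,2)] in auto)
  then have "psi K Ct x = set_lebesgue_integral lborel {0..snd (snd x)} (\<lambda>t. cdf3 M (fst x, fst (snd x), 1))"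
    unfolding psi_def by (intro set_integral_lebesgue_eq_lborel_AE) auto
  then show ?thesis
    using u(3) by (simp add: set_integral_const)
qed

end

theorem theorem5p2:
  fixes C :: "real \<times> real \<times> real \<Rightarrow> real"
    and K :: "real \<Rightarrow> (real \<times> real) measure"
    and Ct :: "real \<Rightarrow> real \<times> real \<Rightarrow> real"
  assumes "F_Pi3 C"
    and "reg_cond_dist (mu_C C) K"
    and "cond_copula K Ct"
  shows "d_inf C (psi K Ct) \<le> 1/8 \<and>
    (d_inf C (psi K Ct) = 1/8 \<longleftrightarrow>
      ((measure (mu_C C) ({0<..<1/2} \<times> {0<..<1/2} \<times> {0<..<1/2}) = 1/4 \<and>
        measure (mu_C C) ({0<..<1/2} \<times> {1/2<..<1} \<times> {1/2<..<1}) = 1/4 \<and>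
        measure (mu_C C) ({1/2<..<1} \<times> {1/2<..<1} \<times> {0<..<1/2}) = 1/4 \<and>
        measure (mu_C C) ({1/2<..<1} \<times> {0<..<1/2} \<times> {1/2<..<1}) = 1/4) \<or>
       (measure (mu_C C) ({0<..<1/2} \<times> {0<..<1/2} \<times> {1/2<..<1}) = 1/4 \<and>
        measure (mu_C C) ({0<..<1/2} \<times> {1/2<..<1} \<times> {0<..<1/2}) = 1/4 \<and>
        measure (mu_C C) ({1/2<..<1} \<times> {1/2<..<1} \<times> {1/2<..<1}) = 1/4 \<and>
        measure (mu_C C) ({1/2<..<1} \<times> {0<..<1/2} \<times> {0<..<1/2}) = 1/4)))"
proof -
  obtain M where M: "copula_measure3 M" and C: "\<And>x. x \<in> unit_cube3 \<Longrightarrow> C x = cdf3 M x"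
    using assms(1) unfolding F_Pi3_def copula3_def is_cdf3_of_def cdf3_def by blast
  have mu: "mu_C C = M"
    using M C by (intro mu_C_eqI) (auto simp: is_cdf3_of_def cdf3_def)
  interpret copula_space3_Pi M
  proof (intro copula_space3_Pi.intro copula_space3I[OF M] copula_space3_Pi_axioms.intro)
    fix u v :: real assume "u \<in> {0..1}" "v \<in> {0..1}"
    then show "cdf3 M (u, 1, v) = u * v" "cdf3 M (1, u, v) = u * v"
      using assms(1) C[of "(u, 1, v)"] C[of "(1, u, v)"] by (auto simp: F_Pi3_def unit_cube3_def)
  qed
  have "d_inf C (psi K Ct) = (SUP x\<in>unit_cube3. indep_gap M x)"
    unfolding d_inf_def indep_gap_def
    using C psi_eq[OF assms(2)[unfolded mu] assms(3)] by (intro SUP_cong) auto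
  then show ?thesis
    using SUP_indep_gap indep_gap_centre_eq_iff unfolding mu by simp
qed

end
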